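(* Let $a_c>b_c>0$, $k_e>0$, $a_e^2=a_c^2+k_e$, $b_e^2=b_c^2+k_e$, let $c$ be the ellipse $x^2/a_c^2+y^2/b_c^2=1$, $e$ the ellipse $x^2/a_e^2+y^2/b_e^2=1$, and let $\alpha(x,y)=\bigl(\frac{a_e}{a_c}x,\frac{b_e}{b_c}y\bigr)$, so $\alpha(c)=e$. Let $\dots P_0P_1P_2\dots$ be a billiard in $e$ with caustic $c$ whose side $[P_i,P_{i+1}]$ touches $c$ at $Q_i$. Then there exists a unique billiard $\dots P_0'P_1'P_2'\dots$ in $e$ with caustic $c$ that is conjugate to it, namely $P_i'=\alpha(Q_i)$ for all $i$, and the relation is symmetric: if $Q_i'$ denotes the point where $[P_i',P_{i+1}']$ touches $c$, then $\alpha(Q_{i-1}')=P_i$ for all $i$. Moreover, for all $i$, $$l_i=\overline{P_iQ_i}=\overline{P_i'Q_{i-1}'}=r_i'\quad\text{and}\quad r_i=\overline{P_iQ_{i-1}}=\overline{P_{i-1}'Q_{i-1}'}=l_{i-1}',$$ where $\overline{XY}$ denotes the Euclidean distance.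
   Context: A billiard in $e$ with caustic $c$ is a sequence $(P_i)_{i\in\mathbb Z}$ of points of $e$ with $P_{i+1}\neq P_i$ such that every line $[P_i,P_{i+1}]$ is tangent to $c$ and $[P_{i-1},P_i]\neq[P_i,P_{i+1}]$. A billiard $\dots P_0'P_1'P_2'\dots$ in $e$ with caustic $c$ is called conjugate to $\dots P_0P_1P_2\dots$ if $\alpha$ maps the contact point $Q_i$ of the side $[P_i,P_{i+1}]$ with $c$ to $P_i'$ for every $i$. Notation: $l_i=\overline{P_iQ_i}$, $r_i=\overline{P_iQ_{i-1}}$, and $l_i',r_i'$ are the analogous quantities for the conjugate billiard. *)

theory Defs
  imports "HOL-Analysis.Analysis"
begin

text \<open>Points of the plane are pairs of reals; the product metric on real \<times> real
is the Euclidean distance, so dist X Y is the length of segment XY.\<close>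

definition on_ellipse :: "real \<Rightarrow> real \<Rightarrow> real \<times> real \<Rightarrow> bool" where
  "on_ellipse a b X \<longleftrightarrow> (fst X)^2 / a^2 + (snd X)^2 / b^2 = 1"

definition line_through :: "real \<times> real \<Rightarrow> real \<times> real \<Rightarrow> (real \<times> real) set" where
  "line_through X Y = {X + t *\<^sub>R (Y - X) | t. True}"

text \<open>The line L is tangent to the ellipse x^2/a^2+y^2/b^2=1 at the contact point Q:
Q lies on the ellipse and on L, and the direction of L is orthogonal to the
normal (x/a^2, y/b^2) of the ellipse at Q.\<close>
definition tangent_at :: "real \<Rightarrow> real \<Rightarrow> real \<times> real \<Rightarrow> real \<times> real \<Rightarrow> real \<times> real \<Rightarrow> bool" where
  "tangent_at a b X Y Q \<longleftrightarrow> on_ellipse a b Q \<and> Q \<in> line_through X Y \<and>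
     (fst Y - fst X) * fst Q / a^2 + (snd Y - snd X) * snd Q / b^2 = 0"

definition billiard :: "real \<Rightarrow> real \<Rightarrow> real \<Rightarrow> real \<Rightarrow> (int \<Rightarrow> real \<times> real) \<Rightarrow> bool" where
  "billiard ae be ac bc P \<longleftrightarrow>
     (\<forall>i. on_ellipse ae be (P i)) \<and>
     (\<forall>i. P (i + 1) \<noteq> P i) \<and>
     (\<forall>i. \<exists>Q. tangent_at ac bc (P i) (P (i + 1)) Q) \<and>
     (\<forall>i. line_through (P (i - 1)) (P i) \<noteq> line_through (P i) (P (i + 1)))"

definition alpha_map :: "real \<Rightarrow> real \<Rightarrow> real \<Rightarrow> real \<Rightarrow> real \<times> real \<Rightarrow> real \<times> real" where
  "alpha_map ae be ac bc X = (ae / ac * fst X, be / bc * snd X)"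

text \<open>P' is conjugate to P, where Q i is the contact point of side [P i, P (i+1)] with c.\<close>
definition conjugate :: "real \<Rightarrow> real \<Rightarrow> real \<Rightarrow> real \<Rightarrow> (int \<Rightarrow> real \<times> real)
     \<Rightarrow> (int \<Rightarrow> real \<times> real) \<Rightarrow> (int \<Rightarrow> real \<times> real) \<Rightarrow> bool" where
  "conjugate ae be ac bc P Q P' \<longleftrightarrow> (\<forall>i. alpha_map ae be ac bc (Q i) = P' i)"

end

(* Write R_i for the point of the caustic c with alpha(R_i) = P_i. Since P_i lies on the
   tangents of c at Q_(i-1) and Q_i, and the relation "alpha(R) lies on the tangent of c at Q"
   is symmetric in Q and R, the points alpha(Q_(i-1)) and alpha(Q_i) lie on the tangent of c
   at R_i. So alpha(Q) is again a billiard, whose side [alpha(Q_(i-1)), alpha(Q_i)] touches c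
   at Q'_(i-1) = R_i, i.e. alpha(Q'_(i-1)) = P_i. The length identities are then instances of
   Ivory's lemma dist(alpha(R), Q) = dist(alpha(Q), R) for Q, R on c. *)

theory Submission
  imports Defs
begin

lemma orthogonal_to_same_imp_parallel:
  fixes n u v :: "real \<times> real"
  assumes "n \<noteq> 0" "n \<bullet> u = 0" "n \<bullet> v = 0" "u \<noteq> 0"
  shows "\<exists>t. v = t *\<^sub>R u"
proof -
  obtain n1 n2 u1 u2 v1 v2 where nuv: "n = (n1, n2)" "u = (u1, u2)" "v = (v1, v2)"
    by (metis surj_pair)
  have "n1 * (u1 * v2 - u2 * v1) = 0" "n2 * (u1 * v2 - u2 * v1) = 0"
    using assms(2,3) unfolding nuv by (simp_all, algebra+)
  then have cross: "u1 * v2 = u2 * v1"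
    using assms(1) unfolding nuv by (auto simp: zero_prod_def)
  have "u1 * u1 + u2 * u2 \<noteq> 0"
    using assms(4) unfolding nuv by (simp add: zero_prod_def)
  moreover have "v1 * (u1 * u1 + u2 * u2) = (v1 * u1 + v2 * u2) * u1"
                "v2 * (u1 * u1 + u2 * u2) = (v1 * u1 + v2 * u2) * u2"
    using cross by algebra+
  ultimately have "v = ((v1 * u1 + v2 * u2) / (u1 * u1 + u2 * u2)) *\<^sub>R u"
    unfolding nuv by (simp add: field_simps)
  then show ?thesis ..
qed

lemma line_through_eq_level_set:
  fixes n A B :: "real \<times> real"
  assumes "A \<noteq> B" "n \<noteq> 0" "n \<bullet> A = c" "n \<bullet> B = c"
  shows "line_through A B = {X. n \<bullet> X = c}"
proof (intro set_eqI iffI)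
  fix X assume "X \<in> line_through A B"
  then obtain t where "X = A + t *\<^sub>R (B - A)"
    unfolding line_through_def by auto
  then show "X \<in> {X. n \<bullet> X = c}"
    using assms(3,4) by (simp add: inner_diff_right inner_add_right)
next
  fix X assume "X \<in> {X. n \<bullet> X = c}"
  then have "n \<bullet> (X - A) = 0" "n \<bullet> (B - A) = 0" "B - A \<noteq> 0"
    using assms by (simp_all add: inner_diff_right)
  then obtain t where "X - A = t *\<^sub>R (B - A)"
    using orthogonal_to_same_imp_parallel assms(2) by blast
  then have "X = A + t *\<^sub>R (B - A)"
    by (simp add: algebra_simps)
  then show "X \<in> line_through A B"
    unfolding line_through_def by auto
qed

definition ellipse_normal :: "real \<Rightarrow> real \<Rightarrow> real \<times> real \<Rightarrow> real \<times> real" where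
  "ellipse_normal a b Q = (fst Q / a^2, snd Q / b^2)"

definition tangent_line :: "real \<Rightarrow> real \<Rightarrow> real \<times> real \<Rightarrow> (real \<times> real) set" where
  "tangent_line a b Q = {X. ellipse_normal a b Q \<bullet> X = 1}"

lemma ellipse_normal_inner:
  "ellipse_normal a b Q \<bullet> X = fst X * fst Q / a^2 + snd X * snd Q / b^2"
  by (cases X) (simp add: ellipse_normal_def mult.commute)

lemma ellipse_normal_inner_self:
  "on_ellipse a b Q \<Longrightarrow> ellipse_normal a b Q \<bullet> Q = 1"
  unfolding on_ellipse_def ellipse_normal_inner by (simp add: power2_eq_square)

lemma in_tangent_line_self: "on_ellipse a b Q \<Longrightarrow> Q \<in> tangent_line a b Q"
  unfolding tangent_line_def by (simp add: ellipse_normal_inner_self)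

lemma line_through_eq_tangent_line:
  assumes "X \<noteq> Y" "on_ellipse a b Q" "X \<in> tangent_line a b Q" "Y \<in> tangent_line a b Q"
  shows "line_through X Y = tangent_line a b Q"
proof -
  have "ellipse_normal a b Q \<noteq> 0"
    using ellipse_normal_inner_self[OF assms(2)] by auto
  then show ?thesis
    using line_through_eq_level_set assms unfolding tangent_line_def by auto
qed

lemma tangent_at_iff:
  assumes "X \<noteq> Y"
  shows "tangent_at a b X Y Q \<longleftrightarrow>
    on_ellipse a b Q \<and> X \<in> tangent_line a b Q \<and> Y \<in> tangent_line a b Q"
proof -
  let ?n = "ellipse_normal a b Q"
  have orth: "(fst Y - fst X) * fst Q / a^2 + (snd Y - snd X) * snd Q / b^2 = ?n \<bullet> (Y - X)"
    by (simp add: ellipse_normal_inner algebra_simps diff_divide_distrib add_divide_distrib)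
  show ?thesis
  proof
    assume "tangent_at a b X Y Q"
    then obtain t where "Q = X + t *\<^sub>R (Y - X)" and "?n \<bullet> (Y - X) = 0" and Q: "on_ellipse a b Q"
      unfolding tangent_at_def line_through_def orth by auto
    then have "?n \<bullet> X = ?n \<bullet> Q" "?n \<bullet> Y = ?n \<bullet> X"
      by (simp_all add: inner_add_right inner_diff_right)
    with Q show "on_ellipse a b Q \<and> X \<in> tangent_line a b Q \<and> Y \<in> tangent_line a b Q"
      unfolding tangent_line_def by (simp add: ellipse_normal_inner_self)
  next
    assume "on_ellipse a b Q \<and> X \<in> tangent_line a b Q \<and> Y \<in> tangent_line a b Q"
    moreover from this have "Q \<in> line_through X Y"
      using line_through_eq_tangent_line[OF assms] in_tangent_line_self by blast
    ultimately show "tangent_at a b X Y Q"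
      unfolding tangent_at_def orth tangent_line_def by (simp add: inner_diff_right)
  qed
qed

lemma on_ellipse_in_tangent_line_imp_eq:
  assumes "a \<noteq> 0" "b \<noteq> 0" "on_ellipse a b Q" "on_ellipse a b R" "R \<in> tangent_line a b Q"
  shows "R = Q"
proof -
  have "(fst Q - fst R)^2 / a^2 + (snd Q - snd R)^2 / b^2
      = ellipse_normal a b Q \<bullet> Q + ellipse_normal a b R \<bullet> R - 2 * (ellipse_normal a b Q \<bullet> R)"
    using assms(1,2) unfolding ellipse_normal_inner by (simp add: field_simps power2_eq_square)
  also have "\<dots> = 0"
    using assms(3-5) by (simp add: ellipse_normal_inner_self tangent_line_def)
  finally have "(fst Q - fst R)^2 / a^2 + (snd Q - snd R)^2 / b^2 = 0" .
  then have "(fst Q - fst R)^2 / a^2 = 0" "(snd Q - snd R)^2 / b^2 = 0"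
    by (smt (verit) zero_le_divide_iff zero_le_power2)+
  with assms(1,2) show ?thesis by (simp add: prod_eq_iff)
qed

lemma tangent_at_unique:
  assumes "a \<noteq> 0" "b \<noteq> 0" "X \<noteq> Y" "tangent_at a b X Y Q" "tangent_at a b X Y R"
  shows "R = Q"
proof -
  have "tangent_line a b R = tangent_line a b Q"
    using assms(3-5) line_through_eq_tangent_line[OF assms(3)] by (metis tangent_at_iff)
  then show ?thesis
    using assms on_ellipse_in_tangent_line_imp_eq in_tangent_line_self tangent_at_iff by metis
qed

lemma billiard_iff_contact_points_distinct:
  assumes "ac \<noteq> 0" "bc \<noteq> 0"
    and "\<forall>i. on_ellipse ae be (P i)" "\<forall>i. P (i + 1) \<noteq> P i"
    and "\<forall>i. tangent_at ac bc (P i) (P (i + 1)) (Q i)"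
  shows "billiard ae be ac bc P \<longleftrightarrow> (\<forall>i. Q (i - 1) \<noteq> Q i)"
proof -
  have contact: "on_ellipse ac bc (Q i)"
    and side: "line_through (P i) (P (i + 1)) = tangent_line ac bc (Q i)" for i
    using assms(4,5) tangent_at_iff line_through_eq_tangent_line by metis+
  have "line_through (P (i - 1)) (P i) = line_through (P i) (P (i + 1)) \<longleftrightarrow> Q (i - 1) = Q i" for i
    using side[of "i - 1"] side[of i] contact in_tangent_line_self
      on_ellipse_in_tangent_line_imp_eq[OF assms(1,2)] by (metis diff_add_cancel)
  then show ?thesis
    using assms unfolding billiard_def by blast
qed

lemma bij_alpha_map:
  assumes "ae \<noteq> 0" "be \<noteq> 0" "ac \<noteq> 0" "bc \<noteq> 0"
  shows "bij (alpha_map ae be ac bc)"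
proof (rule bijI')
  show "alpha_map ae be ac bc X = alpha_map ae be ac bc Y \<longleftrightarrow> X = Y" for X Y
    using assms unfolding alpha_map_def by (auto simp: prod_eq_iff)
  show "\<exists>X. P = alpha_map ae be ac bc X" for P
    using assms by (intro exI[of _ "(ac / ae * fst P, bc / be * snd P)"]) (simp add: alpha_map_def)
qed

lemma on_ellipse_alpha_map_iff:
  assumes "ae \<noteq> 0" "be \<noteq> 0" "ac \<noteq> 0" "bc \<noteq> 0"
  shows "on_ellipse ae be (alpha_map ae be ac bc X) \<longleftrightarrow> on_ellipse ac bc X"
  using assms unfolding on_ellipse_def alpha_map_def by (simp add: power_divide power_mult_distrib)

(* Both sides equal ae/ac^3 q1 r1 + be/bc^3 q2 r2 with Q = (q1, q2), R = (r1, r2). *)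
lemma alpha_map_in_tangent_line_commute:
  "alpha_map ae be ac bc R \<in> tangent_line ac bc Q \<longleftrightarrow> alpha_map ae be ac bc Q \<in> tangent_line ac bc R"
  unfolding tangent_line_def ellipse_normal_inner alpha_map_def by (simp add: algebra_simps)

lemma tangent_at_alpha_map:
  assumes "ae \<noteq> 0" "be \<noteq> 0" "ac \<noteq> 0" "bc \<noteq> 0"
    and "on_ellipse ac bc R" "on_ellipse ac bc Q\<^sub>1" "on_ellipse ac bc Q\<^sub>2" "Q\<^sub>1 \<noteq> Q\<^sub>2"
    and "alpha_map ae be ac bc R \<in> tangent_line ac bc Q\<^sub>1"
    and "alpha_map ae be ac bc R \<in> tangent_line ac bc Q\<^sub>2"
  shows "tangent_at ac bc (alpha_map ae be ac bc Q\<^sub>1) (alpha_map ae be ac bc Q\<^sub>2) R"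
proof -
  have "alpha_map ae be ac bc Q\<^sub>1 \<noteq> alpha_map ae be ac bc Q\<^sub>2"
    using bij_alpha_map[OF assms(1-4)] assms(8) by (metis bij_def inj_eq)
  then show ?thesis
    using assms(5,9,10) by (simp add: tangent_at_iff alpha_map_in_tangent_line_commute)
qed

(* Ivory's lemma; it only uses that c and e are confocal: ae^2 - ac^2 = be^2 - bc^2. *)
lemma ivory_dist:
  fixes ac bc ke ae be :: real
  assumes "ac \<noteq> 0" "bc \<noteq> 0" "ae^2 = ac^2 + ke" "be^2 = bc^2 + ke"
    and "on_ellipse ac bc Q" "on_ellipse ac bc R"
  shows "dist (alpha_map ae be ac bc R) Q = dist (alpha_map ae be ac bc Q) R"
proof -
  obtain q1 q2 r1 r2 where QR: "Q = (q1, q2)" "R = (r1, r2)"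
    by (metis surj_pair)
  have hq: "q1^2 / ac^2 + q2^2 / bc^2 = 1" and hr: "r1^2 / ac^2 + r2^2 / bc^2 = 1"
    using assms(5,6) unfolding QR on_ellipse_def by simp_all
  have "(ae / ac * r1 - q1)^2 + (be / bc * r2 - q2)^2 - ((ae / ac * q1 - r1)^2 + (be / bc * q2 - r2)^2)
      = (ae^2 / ac^2 - 1) * (r1^2 - q1^2) + (be^2 / bc^2 - 1) * (r2^2 - q2^2)"
    by (simp add: power2_eq_square power_divide algebra_simps diff_divide_distrib add_divide_distrib)
  also have "\<dots> = ke * (r1^2 / ac^2 + r2^2 / bc^2) - ke * (q1^2 / ac^2 + q2^2 / bc^2)"
    using assms(1-4) by (simp add: field_simps)
  also have "\<dots> = 0"
    using hq hr by simp
  finally show ?thesis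
    unfolding QR alpha_map_def by (simp add: dist_Pair_Pair dist_real_def)
qed

lemma billiard_alpha_map_contact_points:
  assumes "ae \<noteq> 0" "be \<noteq> 0" "ac \<noteq> 0" "bc \<noteq> 0"
    and "billiard ae be ac bc P" "\<forall>i. tangent_at ac bc (P i) (P (i + 1)) (Q i)"
    and "\<forall>i. alpha_map ae be ac bc (R i) = P i"
  shows "billiard ae be ac bc (\<lambda>i. alpha_map ae be ac bc (Q i))"
    and "\<forall>i. tangent_at ac bc (alpha_map ae be ac bc (Q i)) (alpha_map ae be ac bc (Q (i + 1))) (R (i + 1))"
proof -
  let ?\<alpha> = "alpha_map ae be ac bc"
  note nz = assms(1-4)
  have P_on: "on_ellipse ae be (P i)" and P_ne: "P (i + 1) \<noteq> P i" for i
    using assms(5) unfolding billiard_def by auto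
  have Q_tan: "on_ellipse ac bc (Q i) \<and> P i \<in> tangent_line ac bc (Q i)
      \<and> P (i + 1) \<in> tangent_line ac bc (Q i)" for i
    using assms(6) P_ne tangent_at_iff by metis
  have Q_ne: "Q (i - 1) \<noteq> Q i" for i
    using billiard_iff_contact_points_distinct[OF nz(3,4)] P_on P_ne assms(5,6) by blast
  have R_on: "on_ellipse ac bc (R i)" for i
    using P_on[of i] assms(7) on_ellipse_alpha_map_iff[OF nz, of "R i"] by simp
  have Q_ne': "Q i \<noteq> Q (i + 1)" for i
    using Q_ne[of "i + 1"] by simp
  show tan_R: "\<forall>i. tangent_at ac bc (?\<alpha> (Q i)) (?\<alpha> (Q (i + 1))) (R (i + 1))"
    using tangent_at_alpha_map[OF nz R_on] Q_tan Q_ne' assms(7) by simp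
  have \<alpha>Q_on: "\<forall>i. on_ellipse ae be (?\<alpha> (Q i))"
    using Q_tan on_ellipse_alpha_map_iff[OF nz] by blast
  have \<alpha>Q_ne: "\<forall>i. ?\<alpha> (Q (i + 1)) \<noteq> ?\<alpha> (Q i)"
    using Q_ne' bij_is_inj[OF bij_alpha_map[OF nz]] by (metis injD)
  have "\<forall>i. R (i - 1 + 1) \<noteq> R (i + 1)"
    using P_ne assms(7) by (metis diff_add_cancel)
  then show "billiard ae be ac bc (\<lambda>i. ?\<alpha> (Q i))"
    using billiard_iff_contact_points_distinct[OF nz(3,4) \<alpha>Q_on \<alpha>Q_ne, of "\<lambda>i. R (i + 1)"] tan_R
    by blast
qed

theorem lemma3p11:
  fixes ac bc ke ae be :: real
    and P Q :: "int \<Rightarrow> real \<times> real"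
  assumes "ac > bc" and "bc > 0" and "ke > 0"
    and "ae > 0" and "be > 0"
    and "ae^2 = ac^2 + ke" and "be^2 = bc^2 + ke"
    and "billiard ae be ac bc P"
    and "\<forall>i. tangent_at ac bc (P i) (P (i + 1)) (Q i)"
  shows "(\<exists>!P'. billiard ae be ac bc P' \<and> conjugate ae be ac bc P Q P')
    \<and> billiard ae be ac bc (\<lambda>i. alpha_map ae be ac bc (Q i))
    \<and> (\<forall>Q'. (\<forall>i. tangent_at ac bc (alpha_map ae be ac bc (Q i))
                                   (alpha_map ae be ac bc (Q (i + 1))) (Q' i)) \<longrightarrow>
         (\<forall>i. alpha_map ae be ac bc (Q' (i - 1)) = P i
            \<and> dist (P i) (Q i) = dist (alpha_map ae be ac bc (Q i)) (Q' (i - 1))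
            \<and> dist (P i) (Q (i - 1)) = dist (alpha_map ae be ac bc (Q (i - 1))) (Q' (i - 1))))"
proof -
  let ?\<alpha> = "alpha_map ae be ac bc"
  have nz: "ae \<noteq> 0" "be \<noteq> 0" "ac \<noteq> 0" "bc \<noteq> 0"
    using assms(1-5) by auto
  define R where "R i = inv ?\<alpha> (P i)" for i
  have \<alpha>R: "\<forall>i. ?\<alpha> (R i) = P i"
    unfolding R_def using bij_is_surj[OF bij_alpha_map[OF nz]] by (simp add: surj_f_inv_f)
  note conj_billiard = billiard_alpha_map_contact_points[OF nz assms(8,9) \<alpha>R]
  have Q_on: "on_ellipse ac bc (Q i)" for i
    using assms(9) unfolding tangent_at_def by blast
  have "on_ellipse ae be (?\<alpha> (R i))" for i
    using assms(8) \<alpha>R unfolding billiard_def by simp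
  then have R_on: "on_ellipse ac bc (R i)" for i
    using on_ellipse_alpha_map_iff[OF nz] by blast
  have ivory: "dist (P i) (Q j) = dist (?\<alpha> (Q j)) (R i)" for i j
    using ivory_dist[OF nz(3,4) assms(6,7) Q_on R_on, of i j] \<alpha>R by simp
  have \<alpha>Q_ne: "?\<alpha> (Q (j + 1)) \<noteq> ?\<alpha> (Q j)" for j
    using conj_billiard(1) unfolding billiard_def by blast
  have "?\<alpha> (Q' (i - 1)) = P i \<and> dist (P i) (Q i) = dist (?\<alpha> (Q i)) (Q' (i - 1))
      \<and> dist (P i) (Q (i - 1)) = dist (?\<alpha> (Q (i - 1))) (Q' (i - 1))"
    if "\<forall>i. tangent_at ac bc (?\<alpha> (Q i)) (?\<alpha> (Q (i + 1))) (Q' i)" for Q' i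
  proof -
    have "Q' (i - 1) = R i"
      using tangent_at_unique[OF nz(3,4) not_sym[OF \<alpha>Q_ne] conj_billiard(2)[rule_format] that[rule_format], of "i - 1"]
      by simp
    then show ?thesis
      using ivory \<alpha>R by simp
  qed
  then show ?thesis
    using conj_billiard unfolding conjugate_def by auto
qed

end
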